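(* For a weakly coupled POMDP and horizon $T$, the componentwise inequalities (VI$^m$) are valid for MILP (IP), for MILP (LB) and for the nonlinear program (UB): every feasible solution of each of these programs can be extended by nonnegative variables $\tau^{t,m}_{s'a'soa}$ satisfying (VI$^m$) for all $m$. Moreover, there exist instances and feasible solutions of the linear relaxation of (IP) that do not satisfy (VI$^m$) (for any choice of the additional variables).
   Context: Weakly coupled POMDP: components $m\in[M]$, each a POMDP $(\mathcal X_S^m,\mathcal X_O^m,\mathcal X_A^m,\mathfrak p^m,\mathbf r^m)$ (initial $p^m(s)$, emissions $p^m(o|s)$, transitions $p^m(s'|s,a)$, reward $r^m$); $\mathbf D^m:\mathcal X_A^m\to\mathbb R^q$, $\mathbf b\in\mathbb R^q_{\ge0}$. For a POMDP, $\mathcal Q(T,\mathcal X_S,\mathcal X_O,\mathcal X_A,\mathfrak p)$: $(\tau,\delta)$ with $\delta^t_{a|o}\ge0$, $\sum_a\delta^t_{a|o}=1$, nonnegative $\tau$ with (i) $\tau^1_s=p(s)$; (ii) $\sum_{o,a}\tau^t_{soa}=\nu^t_s$, $\nu^1_s=\tau^1_s$, $\nu^t_s=\sum_{s'',a''}\tau^{t-1}_{s''a''s}$; (iii) $\sum_{\bar s}\tau^t_{sa\bar s}=\sum_o\tau^t_{soa}$; (iv) $\tau^t_{sas'}=p(s'|s,a)\sum_{\bar s}\tau^t_{sa\bar s}$; (v) $\tau^t_{soa}=\delta^t_{a|o}p(o|s)\sum_{o',a'}\tau^t_{so'a'}$. $\mathcal Q^{\mathrm d}$: same with $\delta^t_{a|o}\in\{0,1\}$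 and (v) replaced by $\tau^t_{soa}\le p(o|s)\nu^t_s$, $\tau^t_{soa}\le\delta^t_{a|o}$, $\tau^t_{soa}\ge p(o|s)\nu^t_s+\delta^t_{a|o}-1$. (IP): maximize $\sum_t\sum_m\sum_{s,a,s'}r^m(s,a,s')\tau^{t,m}_{sas'}$ s.t. $(\tau^m,\delta^m)\in\mathcal Q^{\mathrm d}(T,\mathcal X_S^m,\mathcal X_O^m,\mathcal X_A^m,\mathfrak p^m)$, $\tau^{t,m}_a=\sum_{s,o}\tau^{t,m}_{soa}$, $\sum_m\sum_a\mathbf D^m(a)\tau^{t,m}_a\le\mathbf b$ ($t\in[T]$); its linear relaxation allows $\delta^{t,m}_{a|o}\in[0,1]$. (UB): same with $\mathcal Q$ instead of $\mathcal Q^{\mathrm d}$. (LB): same objective, $(\tau^m,\delta^m)\in\mathcal Q^{\mathrm d}$ for all $m$, and $\sum_m\sum_a\mathbf D^m(a)\delta^{t,m}_{a|o^m}\le\mathbf b$ for all $\mathbf o\in\prod_m\mathcal X_O^m$, $t\in[T]$. (VI$^m$): for $t\in\{2,\dots,T\}$ and all $s,s'\in\mathcal X_S^m$, $o\in\mathcal X_O^m$, $a,a'\in\mathcal X_A^m$: $\sum_{s',a'}\tau^{t,m}_{s'a'soa}=\tau^{t,m}_{soa}$; $\sum_a\tau^{t,m}_{s'a'soa}=p^m(o|s)p^m(s|s',a')\tau^{t-1,m}_{s'a'}$ with $\tau^{t-1,m}_{s'a'}:=\sum_{\bar s}\tau^{t-1,m}_{s'a'\bar s}$; $\tau^{t,m}_{s'a'soa}=p^m(s|s',a',o)\sum_{\bar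 s}\tau^{t,m}_{s'a'\bar soa}$, where $p^m(s|s',a',o)=p^m(o|s)p^m(s|s',a')/\sum_{\bar s}p^m(o|\bar s)p^m(\bar s|s',a')$. *)

theory Defs
  imports Complex_Main
begin

(* One POMDP component.  States, observations, actions are finite subsets of
   ambient types; pobs s o = p(o|s); ptrans s a s' = p(s'|s,a); rew s a s' = r(s,a,s'). *)
record ('s,'o,'a) pomdp =
  st :: "'s set"
  ob :: "'o set"
  ac :: "'a set"
  pinit :: "'s \<Rightarrow> real"
  pobs :: "'s \<Rightarrow> 'o \<Rightarrow> real"
  ptrans :: "'s \<Rightarrow> 'a \<Rightarrow> 's \<Rightarrow> real"
  rew :: "'s \<Rightarrow> 'a \<Rightarrow> 's \<Rightarrow> real"

definition wf_pomdp :: "('s,'o,'a) pomdp \<Rightarrow> bool" where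
  "wf_pomdp P \<longleftrightarrow>
     finite (st P) \<and> finite (ob P) \<and> finite (ac P) \<and>
     st P \<noteq> {} \<and> ob P \<noteq> {} \<and> ac P \<noteq> {} \<and>
     (\<forall>s\<in>st P. pinit P s \<ge> 0) \<and> (\<Sum>s\<in>st P. pinit P s) = 1 \<and>
     (\<forall>s\<in>st P. (\<forall>w\<in>ob P. pobs P s w \<ge> 0) \<and> (\<Sum>w\<in>ob P. pobs P s w) = 1) \<and>
     (\<forall>s\<in>st P. \<forall>a\<in>ac P. (\<forall>s'\<in>st P. ptrans P s a s' \<ge> 0) \<and>
                            (\<Sum>s'\<in>st P. ptrans P s a s') = 1)"

(* Variables of one component: tauS s = tau^1_s, tauSOA t s w a = tau^t_{soa},
   tauSAS t s a s' = tau^t_{sas'}, dlt t w a = delta^t_{a|w}. *)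
record ('s,'o,'a) sol =
  tauS :: "'s \<Rightarrow> real"
  tauSOA :: "nat \<Rightarrow> 's \<Rightarrow> 'o \<Rightarrow> 'a \<Rightarrow> real"
  tauSAS :: "nat \<Rightarrow> 's \<Rightarrow> 'a \<Rightarrow> 's \<Rightarrow> real"
  dlt :: "nat \<Rightarrow> 'o \<Rightarrow> 'a \<Rightarrow> real"

definition nu :: "('s,'o,'a) pomdp \<Rightarrow> ('s,'o,'a) sol \<Rightarrow> nat \<Rightarrow> 's \<Rightarrow> real" where
  "nu P x t s = (if t = 1 then tauS x s
                 else (\<Sum>s''\<in>st P. \<Sum>a''\<in>ac P. tauSAS x (t - 1) s'' a'' s))"

definition flow_constraints :: "nat \<Rightarrow> ('s,'o,'a) pomdp \<Rightarrow> ('s,'o,'a) sol \<Rightarrow> bool" where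
  "flow_constraints T P x \<longleftrightarrow>
     (\<forall>s\<in>st P. tauS x s \<ge> 0 \<and> tauS x s = pinit P s) \<and>
     (\<forall>t\<in>{1..T}. \<forall>s\<in>st P. \<forall>w\<in>ob P. \<forall>a\<in>ac P. tauSOA x t s w a \<ge> 0) \<and>
     (\<forall>t\<in>{1..T}. \<forall>s\<in>st P. \<forall>a\<in>ac P. \<forall>s'\<in>st P. tauSAS x t s a s' \<ge> 0) \<and>
     (\<forall>t\<in>{1..T}. \<forall>w\<in>ob P. (\<forall>a\<in>ac P. dlt x t w a \<ge> 0) \<and> (\<Sum>a\<in>ac P. dlt x t w a) = 1) \<and>
     (\<forall>t\<in>{1..T}. \<forall>s\<in>st P. (\<Sum>w\<in>ob P. \<Sum>a\<in>ac P. tauSOA x t s w a) = nu P x t s) \<and>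
     (\<forall>t\<in>{1..T}. \<forall>s\<in>st P. \<forall>a\<in>ac P.
        (\<Sum>sb\<in>st P. tauSAS x t s a sb) = (\<Sum>w\<in>ob P. tauSOA x t s w a)) \<and>
     (\<forall>t\<in>{1..T}. \<forall>s\<in>st P. \<forall>a\<in>ac P. \<forall>s'\<in>st P.
        tauSAS x t s a s' = ptrans P s a s' * (\<Sum>sb\<in>st P. tauSAS x t s a sb))"

definition inQ :: "nat \<Rightarrow> ('s,'o,'a) pomdp \<Rightarrow> ('s,'o,'a) sol \<Rightarrow> bool" where
  "inQ T P x \<longleftrightarrow> flow_constraints T P x \<and>
     (\<forall>t\<in>{1..T}. \<forall>s\<in>st P. \<forall>w\<in>ob P. \<forall>a\<in>ac P.
        tauSOA x t s w a = dlt x t w a * pobs P s w * (\<Sum>w'\<in>ob P. \<Sum>a'\<in>ac P. tauSOA x t s w' a'))"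

definition inQd_gen :: "(real \<Rightarrow> bool) \<Rightarrow> nat \<Rightarrow> ('s,'o,'a) pomdp \<Rightarrow> ('s,'o,'a) sol \<Rightarrow> bool" where
  "inQd_gen dlt_ok T P x \<longleftrightarrow> flow_constraints T P x \<and>
     (\<forall>t\<in>{1..T}. \<forall>w\<in>ob P. \<forall>a\<in>ac P. dlt_ok (dlt x t w a)) \<and>
     (\<forall>t\<in>{1..T}. \<forall>s\<in>st P. \<forall>w\<in>ob P. \<forall>a\<in>ac P.
        tauSOA x t s w a \<le> pobs P s w * nu P x t s \<and>
        tauSOA x t s w a \<le> dlt x t w a \<and>
        tauSOA x t s w a \<ge> pobs P s w * nu P x t s + dlt x t w a - 1)"

definition inQd :: "nat \<Rightarrow> ('s,'o,'a) pomdp \<Rightarrow> ('s,'o,'a) sol \<Rightarrow> bool" where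
  "inQd = inQd_gen (\<lambda>v. v = 0 \<or> v = 1)"

definition inQd_relax :: "nat \<Rightarrow> ('s,'o,'a) pomdp \<Rightarrow> ('s,'o,'a) sol \<Rightarrow> bool" where
  "inQd_relax = inQd_gen (\<lambda>v. 0 \<le> v \<and> v \<le> 1)"

(* weakly coupled instance: M components P m (m < M), D m a j = j-th entry of D^m(a), b j (j < q) *)
definition wf_instance :: "nat \<Rightarrow> nat \<Rightarrow> (nat \<Rightarrow> ('s,'o,'a) pomdp) \<Rightarrow> (nat \<Rightarrow> real) \<Rightarrow> bool" where
  "wf_instance M q P b \<longleftrightarrow> (\<forall>m<M. wf_pomdp (P m)) \<and> (\<forall>j<q. b j \<ge> 0)"

definition tau_a :: "('s,'o,'a) pomdp \<Rightarrow> ('s,'o,'a) sol \<Rightarrow> nat \<Rightarrow> 'a \<Rightarrow> real" where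
  "tau_a P x t a = (\<Sum>s\<in>st P. \<Sum>w\<in>ob P. tauSOA x t s w a)"

definition coupling :: "nat \<Rightarrow> nat \<Rightarrow> nat \<Rightarrow> (nat \<Rightarrow> ('s,'o,'a) pomdp) \<Rightarrow>
    (nat \<Rightarrow> 'a \<Rightarrow> nat \<Rightarrow> real) \<Rightarrow> (nat \<Rightarrow> real) \<Rightarrow> (nat \<Rightarrow> ('s,'o,'a) sol) \<Rightarrow> bool" where
  "coupling M q T P D b X \<longleftrightarrow>
     (\<forall>t\<in>{1..T}. \<forall>j<q. (\<Sum>m<M. \<Sum>a\<in>ac (P m). D m a j * tau_a (P m) (X m) t a) \<le> b j)"

definition IP_feas where
  "IP_feas M q T P D b X \<longleftrightarrow> (\<forall>m<M. inQd T (P m) (X m)) \<and> coupling M q T P D b X"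

definition IPrelax_feas where
  "IPrelax_feas M q T P D b X \<longleftrightarrow> (\<forall>m<M. inQd_relax T (P m) (X m)) \<and> coupling M q T P D b X"

definition UB_feas where
  "UB_feas M q T P D b X \<longleftrightarrow> (\<forall>m<M. inQ T (P m) (X m)) \<and> coupling M q T P D b X"

definition LB_feas :: "nat \<Rightarrow> nat \<Rightarrow> nat \<Rightarrow> (nat \<Rightarrow> ('s,'o,'a) pomdp) \<Rightarrow>
    (nat \<Rightarrow> 'a \<Rightarrow> nat \<Rightarrow> real) \<Rightarrow> (nat \<Rightarrow> real) \<Rightarrow> (nat \<Rightarrow> ('s,'o,'a) sol) \<Rightarrow> bool" where
  "LB_feas M q T P D b X \<longleftrightarrow> (\<forall>m<M. inQd T (P m) (X m)) \<and>
     (\<forall>t\<in>{1..T}. \<forall>obs. (\<forall>m<M. obs m \<in> ob (P m)) \<longrightarrow>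
        (\<forall>j<q. (\<Sum>m<M. \<Sum>a\<in>ac (P m). D m a j * dlt (X m) t (obs m) a) \<le> b j))"

definition pcond :: "('s,'o,'a) pomdp \<Rightarrow> 's \<Rightarrow> 'a \<Rightarrow> 'o \<Rightarrow> 's \<Rightarrow> real" where
  "pcond P s' a' w s = pobs P s w * ptrans P s' a' s /
                        (\<Sum>sb\<in>st P. pobs P sb w * ptrans P s' a' sb)"

(* y t s' a' s w a = tau^t_{s'a'soa}: nonnegative and satisfying (VI) *)
definition VI_ext :: "nat \<Rightarrow> ('s,'o,'a) pomdp \<Rightarrow> ('s,'o,'a) sol \<Rightarrow>
    (nat \<Rightarrow> 's \<Rightarrow> 'a \<Rightarrow> 's \<Rightarrow> 'o \<Rightarrow> 'a \<Rightarrow> real) \<Rightarrow> bool" where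
  "VI_ext T P x y \<longleftrightarrow>
     (\<forall>t\<in>{2..T}. \<forall>s'\<in>st P. \<forall>a'\<in>ac P. \<forall>s\<in>st P. \<forall>w\<in>ob P. \<forall>a\<in>ac P. y t s' a' s w a \<ge> 0) \<and>
     (\<forall>t\<in>{2..T}. \<forall>s\<in>st P. \<forall>w\<in>ob P. \<forall>a\<in>ac P.
        (\<Sum>s'\<in>st P. \<Sum>a'\<in>ac P. y t s' a' s w a) = tauSOA x t s w a) \<and>
     (\<forall>t\<in>{2..T}. \<forall>s'\<in>st P. \<forall>a'\<in>ac P. \<forall>s\<in>st P. \<forall>w\<in>ob P.
        (\<Sum>a\<in>ac P. y t s' a' s w a) =
          pobs P s w * ptrans P s' a' s * (\<Sum>sb\<in>st P. tauSAS x (t - 1) s' a' sb)) \<and>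
     (\<forall>t\<in>{2..T}. \<forall>s'\<in>st P. \<forall>a'\<in>ac P. \<forall>s\<in>st P. \<forall>w\<in>ob P. \<forall>a\<in>ac P.
        y t s' a' s w a = pcond P s' a' w s * (\<Sum>sb\<in>st P. y t s' a' sb w a))"

end

theory Submission
  imports Defs
begin

text \<open>On both Q and Q^d (on the latter because McCormick's envelope is exact for binary
  delta) the occupation measure factorizes as tau^t_{soa} = delta^t_{a|o} p(o|s) nu^t_s, and then
  tau^t_{s'a'soa} := delta^t_{a|o} p(o|s) p(s|s',a') tau^{t-1}_{s'a'} satisfies (VI).
  For fractional delta the factorization fails: with uninformative observations and uniform
  transitions, (VI) forces tau^2_{soa} not to depend on s, whereas the relaxation may play
  the action a = s.\<close>

definition factorizes :: "nat \<Rightarrow> ('s,'o,'a) pomdp \<Rightarrow> ('s,'o,'a) sol \<Rightarrow> bool" where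
  "factorizes T P x \<longleftrightarrow> (\<forall>t\<in>{1..T}. \<forall>s\<in>st P. \<forall>w\<in>ob P. \<forall>a\<in>ac P.
      tauSOA x t s w a = dlt x t w a * pobs P s w * nu P x t s)"

lemma inQ_factorizes:
  assumes "inQ T P x"
  shows "factorizes T P x"
  unfolding factorizes_def
proof (intro ballI)
  fix t s w a assume tswa: "t \<in> {1..T}" "s \<in> st P" "w \<in> ob P" "a \<in> ac P"
  have tau_eq: "tauSOA x t s w a
        = dlt x t w a * pobs P s w * (\<Sum>w'\<in>ob P. \<Sum>a'\<in>ac P. tauSOA x t s w' a')"
    using assms tswa unfolding inQ_def by blast
  have nu_eq: "(\<Sum>w'\<in>ob P. \<Sum>a'\<in>ac P. tauSOA x t s w' a') = nu P x t s"
    using assms tswa unfolding inQ_def flow_constraints_def by blast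
  show "tauSOA x t s w a = dlt x t w a * pobs P s w * nu P x t s"
    unfolding nu_eq[symmetric] by (rule tau_eq)
qed

lemma inQd_factorizes:
  assumes "inQd T P x"
  shows "factorizes T P x"
  unfolding factorizes_def
proof (intro ballI)
  fix t s w a assume "t \<in> {1..T}" "s \<in> st P" "w \<in> ob P" "a \<in> ac P"
  then have "dlt x t w a = 0 \<or> dlt x t w a = 1"
    and "tauSOA x t s w a \<le> pobs P s w * nu P x t s"
    and "tauSOA x t s w a \<le> dlt x t w a"
    and "tauSOA x t s w a \<ge> pobs P s w * nu P x t s + dlt x t w a - 1"
    and "tauSOA x t s w a \<ge> 0"
    using assms by (auto simp: inQd_def inQd_gen_def flow_constraints_def)
  then show "tauSOA x t s w a = dlt x t w a * pobs P s w * nu P x t s"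
    by auto
qed

text \<open>The case of a vanishing normalizer, where \<open>pcond\<close> is \<open>0\<close> by \<open>x / 0 = 0\<close>,
  goes through because then every summand vanishes.\<close>

lemma pcond_mult_sum:
  assumes "wf_pomdp P" "s \<in> st P" "s' \<in> st P" "a' \<in> ac P" "w \<in> ob P"
  shows "c * (pobs P s w * ptrans P s' a' s)
       = pcond P s' a' w s * (\<Sum>sb\<in>st P. c * (pobs P sb w * ptrans P s' a' sb))"
proof -
  define Z where "Z = (\<Sum>sb\<in>st P. pobs P sb w * ptrans P s' a' sb)"
  have sum_eq: "(\<Sum>sb\<in>st P. c * (pobs P sb w * ptrans P s' a' sb)) = c * Z"
    unfolding Z_def by (simp add: sum_distrib_left)
  show ?thesis
  proof (cases "Z = 0")
    case True
    have "finite (st P)" "\<forall>sb\<in>st P. pobs P sb w * ptrans P s' a' sb \<ge> 0"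
      using assms unfolding wf_pomdp_def by auto
    then have "\<forall>sb\<in>st P. pobs P sb w * ptrans P s' a' sb = 0"
      using True unfolding Z_def by (simp add: sum_nonneg_eq_0_iff)
    then show ?thesis using assms(2) sum_eq True by simp
  next
    case False
    then show ?thesis using sum_eq unfolding pcond_def Z_def[symmetric] by simp
  qed
qed

lemma factorizes_VI_ext:
  assumes wf: "wf_pomdp P" and fc: "flow_constraints T P x" and fact: "factorizes T P x"
  shows "\<exists>y. VI_ext T P x y"
proof -
  define S where "S t s' a' = (\<Sum>sb\<in>st P. tauSAS x (t - 1) s' a' sb)" for t s' a'
  define y where "y t s' a' s w a = dlt x t w a * (pobs P s w * ptrans P s' a' s) * S t s' a'"
    for t s' a' s w a
  have pobs_nonneg: "pobs P s w \<ge> 0" if "s \<in> st P" "w \<in> ob P" for s w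
    using wf that by (simp add: wf_pomdp_def)
  have ptrans_nonneg: "ptrans P s a s' \<ge> 0" if "s \<in> st P" "a \<in> ac P" "s' \<in> st P" for s a s'
    using wf that by (simp add: wf_pomdp_def)
  have dlt_nonneg: "dlt x t w a \<ge> 0" if "t \<in> {1..T}" "w \<in> ob P" "a \<in> ac P" for t w a
    using fc that by (simp add: flow_constraints_def)
  have dlt_sum: "(\<Sum>a\<in>ac P. dlt x t w a) = 1" if "t \<in> {1..T}" "w \<in> ob P" for t w
    using fc that by (simp add: flow_constraints_def)
  have prev: "tauSAS x (t - 1) s' a' sb \<ge> 0"
      "tauSAS x (t - 1) s' a' sb = ptrans P s' a' sb * S t s' a'"
    if "t \<in> {2..T}" "s' \<in> st P" "a' \<in> ac P" "sb \<in> st P" for t s' a' sb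
  proof -
    have "t - 1 \<in> {1..T}" using that by auto
    then show "tauSAS x (t - 1) s' a' sb \<ge> 0"
      "tauSAS x (t - 1) s' a' sb = ptrans P s' a' sb * S t s' a'"
      using fc that unfolding flow_constraints_def S_def by blast+
  qed
  have S_nonneg: "S t s' a' \<ge> 0" if "t \<in> {2..T}" "s' \<in> st P" "a' \<in> ac P" for t s' a'
    unfolding S_def using prev(1) that by (simp add: sum_nonneg)
  have nu_eq: "nu P x t s = (\<Sum>s'\<in>st P. \<Sum>a'\<in>ac P. ptrans P s' a' s * S t s' a')"
    if "t \<in> {2..T}" "s \<in> st P" for t s
    using prev(2) that unfolding nu_def by simp
  have "VI_ext T P x y"
    unfolding VI_ext_def
  proof (intro conjI ballI)
    fix t s' a' s w a assume "t \<in> {2..T}" "s' \<in> st P" "a' \<in> ac P" "s \<in> st P" "w \<in> ob P" "a \<in> ac P"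
    then show "0 \<le> y t s' a' s w a"
      unfolding y_def using pobs_nonneg ptrans_nonneg dlt_nonneg S_nonneg by simp
  next
    fix t s w a assume "t \<in> {2..T}" "s \<in> st P" "w \<in> ob P" "a \<in> ac P"
    moreover from this have "tauSOA x t s w a = dlt x t w a * pobs P s w * nu P x t s"
      using fact unfolding factorizes_def by simp
    ultimately show "(\<Sum>s'\<in>st P. \<Sum>a'\<in>ac P. y t s' a' s w a) = tauSOA x t s w a"
      using nu_eq unfolding y_def by (simp add: sum_distrib_left mult.assoc)
  next
    fix t s' a' s w assume "t \<in> {2..T}" "s' \<in> st P" "a' \<in> ac P" "s \<in> st P" "w \<in> ob P"
    then show "(\<Sum>a\<in>ac P. y t s' a' s w a)
        = pobs P s w * ptrans P s' a' s * (\<Sum>sb\<in>st P. tauSAS x (t - 1) s' a' sb)"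
      using dlt_sum unfolding y_def S_def by (simp add: sum_distrib_right[symmetric])
  next
    fix t s' a' s w a assume "t \<in> {2..T}" "s' \<in> st P" "a' \<in> ac P" "s \<in> st P" "w \<in> ob P" "a \<in> ac P"
    then show "y t s' a' s w a = pcond P s' a' w s * (\<Sum>sb\<in>st P. y t s' a' sb w a)"
      using pcond_mult_sum[OF wf, of s s' a' w "dlt x t w a * S t s' a'"]
      unfolding y_def by (simp add: ac_simps)
  qed
  then show ?thesis by blast
qed

lemma feasible_component_in_Q_or_Qd:
  assumes "IP_feas M q T P D b X \<or> LB_feas M q T P D b X \<or> UB_feas M q T P D b X" "m < M"
  shows "inQd T (P m) (X m) \<or> inQ T (P m) (X m)"
  using assms by (auto simp: IP_feas_def LB_feas_def UB_feas_def)

lemma inQd_VI_ext: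
  assumes "wf_pomdp P" "inQd T P x"
  shows "\<exists>y. VI_ext T P x y"
proof -
  have "flow_constraints T P x" using assms(2) by (simp add: inQd_def inQd_gen_def)
  then show ?thesis using factorizes_VI_ext[OF assms(1)] inQd_factorizes[OF assms(2)] by blast
qed

lemma inQ_VI_ext:
  assumes "wf_pomdp P" "inQ T P x"
  shows "\<exists>y. VI_ext T P x y"
proof -
  have "flow_constraints T P x" using assms(2) by (simp add: inQ_def)
  then show ?thesis using factorizes_VI_ext[OF assms(1)] inQ_factorizes[OF assms(2)] by blast
qed

lemma feasible_VI_ext:
  assumes "wf_instance M q P b"
    and "IP_feas M q T P D b X \<or> LB_feas M q T P D b X \<or> UB_feas M q T P D b X"
  shows "\<exists>Y. \<forall>m<M. VI_ext T (P m) (X m) (Y m)"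
proof -
  have "\<exists>y. VI_ext T (P m) (X m) y" if "m < M" for m
  proof -
    have wf: "wf_pomdp (P m)" using assms(1) that by (simp add: wf_instance_def)
    from feasible_component_in_Q_or_Qd[OF assms(2) that] show ?thesis
      using inQd_VI_ext[OF wf] inQ_VI_ext[OF wf] by blast
  qed
  then show ?thesis by metis
qed

definition uninformative_pomdp :: "(nat,nat,nat) pomdp" where
  "uninformative_pomdp = \<lparr>st = {0,1}, ob = {0}, ac = {0,1}, pinit = (\<lambda>_. 1/2),
     pobs = (\<lambda>_ _. 1), ptrans = (\<lambda>_ _ _. 1/2), rew = (\<lambda>_ _ _. 0)\<rparr>"

definition state_copying_sol :: "(nat,nat,nat) sol" where
  "state_copying_sol = \<lparr>tauS = (\<lambda>_. 1/2), tauSOA = (\<lambda>t s w a. if s = a then 1/2 else 0),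
     tauSAS = (\<lambda>t s a s'. if s = a then 1/4 else 0), dlt = (\<lambda>_ _ _. 1/2)\<rparr>"

lemma wf_uninformative_pomdp: "wf_pomdp uninformative_pomdp"
  by (simp add: wf_pomdp_def uninformative_pomdp_def)

lemma inQd_relax_state_copying_sol: "inQd_relax 2 uninformative_pomdp state_copying_sol"
proof -
  have "{1..2::nat} = {1,2}" by auto
  then show ?thesis
    unfolding inQd_relax_def inQd_gen_def flow_constraints_def
    by (simp add: uninformative_pomdp_def state_copying_sol_def nu_def)
qed

lemma not_VI_ext_state_copying_sol: "\<not> VI_ext 2 uninformative_pomdp state_copying_sol y"
proof
  assume VI: "VI_ext 2 uninformative_pomdp state_copying_sol y"
  have sets: "st uninformative_pomdp = {0,1}" "ob uninformative_pomdp = {0}"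
    "ac uninformative_pomdp = {0,1}"
    by (simp_all add: uninformative_pomdp_def)
  have pcond_half: "pcond uninformative_pomdp s' a' 0 s = 1/2" for s' a' s
    by (simp add: pcond_def uninformative_pomdp_def)
  have "(2::nat) \<in> {2..2}" by simp
  then have marginal: "\<forall>s\<in>{0,1}.
        (\<Sum>s'\<in>{0,1::nat}. \<Sum>a'\<in>{0,1::nat}. y 2 s' a' s 0 0) = tauSOA state_copying_sol 2 s 0 0"
    and conditional: "\<forall>s'\<in>{0,1}. \<forall>a'\<in>{0,1}. \<forall>s\<in>{0,1}.
        y 2 s' a' s 0 0 = pcond uninformative_pomdp s' a' 0 s * (\<Sum>sb\<in>{0,1::nat}. y 2 s' a' sb 0 0)"
    using VI unfolding VI_ext_def sets by blast+
  have "y 2 s' a' 0 0 0 = y 2 s' a' 1 0 0" if "s' \<in> {0,1}" "a' \<in> {0,1}" for s' a'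
    using conditional that by (auto simp: pcond_half)
  then have "tauSOA state_copying_sol 2 0 0 0 = tauSOA state_copying_sol 2 1 0 0"
    using marginal by simp
  then show False by (simp add: state_copying_sol_def)
qed

theorem mainTheorem8:
  shows "(\<forall>(M::nat) (q::nat) (T::nat) (P :: nat \<Rightarrow> ('s,'o,'a) pomdp)
            (D :: nat \<Rightarrow> 'a \<Rightarrow> nat \<Rightarrow> real) (b :: nat \<Rightarrow> real) (X :: nat \<Rightarrow> ('s,'o,'a) sol).
            wf_instance M q P b \<and>
            (IP_feas M q T P D b X \<or> LB_feas M q T P D b X \<or> UB_feas M q T P D b X)
            \<longrightarrow> (\<exists>Y. \<forall>m<M. VI_ext T (P m) (X m) (Y m)))
       \<and> (\<exists>(M::nat) (q::nat) (T::nat) (P :: nat \<Rightarrow> (nat,nat,nat) pomdp)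
            (D :: nat \<Rightarrow> nat \<Rightarrow> nat \<Rightarrow> real) (b :: nat \<Rightarrow> real) (X :: nat \<Rightarrow> (nat,nat,nat) sol).
            wf_instance M q P b \<and> IPrelax_feas M q T P D b X \<and>
            \<not> (\<exists>Y. \<forall>m<M. VI_ext T (P m) (X m) (Y m)))"
proof (intro conjI allI impI)
  fix M q T and P :: "nat \<Rightarrow> ('s,'o,'a) pomdp" and D :: "nat \<Rightarrow> 'a \<Rightarrow> nat \<Rightarrow> real" and b X
  assume "wf_instance M q P b \<and>
            (IP_feas M q T P D b X \<or> LB_feas M q T P D b X \<or> UB_feas M q T P D b X)"
  then show "\<exists>Y. \<forall>m<M. VI_ext T (P m) (X m) (Y m)"
    using feasible_VI_ext by blast
next
  have "wf_instance 1 0 (\<lambda>_. uninformative_pomdp) (\<lambda>_. 0)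
      \<and> IPrelax_feas 1 0 2 (\<lambda>_. uninformative_pomdp) (\<lambda>_ _ _. 0) (\<lambda>_. 0) (\<lambda>_. state_copying_sol)
      \<and> \<not> (\<exists>Y. \<forall>m<(1::nat). VI_ext 2 uninformative_pomdp state_copying_sol (Y m))"
    using wf_uninformative_pomdp inQd_relax_state_copying_sol not_VI_ext_state_copying_sol
    by (auto simp: wf_instance_def IPrelax_feas_def coupling_def)
  then show "\<exists>(M::nat) (q::nat) (T::nat) (P :: nat \<Rightarrow> (nat,nat,nat) pomdp)
            (D :: nat \<Rightarrow> nat \<Rightarrow> nat \<Rightarrow> real) (b :: nat \<Rightarrow> real) (X :: nat \<Rightarrow> (nat,nat,nat) sol).
            wf_instance M q P b \<and> IPrelax_feas M q T P D b X \<and>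
            \<not> (\<exists>Y. \<forall>m<M. VI_ext T (P m) (X m) (Y m))"
    by blast
qed

end
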